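(* The category of $\mathcal{D}$-coalgebras of the comonad $(\mathcal{D},\delta,\varepsilon)$ on $\mathsf{CLAC}$ is equivalent to the category of Cartesian differential categories and strict Cartesian differential functors between them. Explicitly: a Cartesian differential category $\mathbb{X}$ with combinator $\mathsf{D}$ corresponds to the coalgebra $(\mathbb{X},\omega^{\mathsf{D}})$ with $\omega^{\mathsf{D}}(f)_0=f$ and $\omega^{\mathsf{D}}(f)_n=\mathsf{D}^n[f]$, and a coalgebra $(\mathbb{X},\omega)$ corresponds to the Cartesian differential category with combinator $\mathsf{D}^\omega[f]=\omega(f)_1$; these assignments are mutually inverse, and coalgebra morphisms are exactly strict Cartesian differential functors.
   Context: Composition is written in diagrammatic order: $fg$ means first $f$ then $g$. A left additive category is a category whose hom-sets are commutative monoids (with $+$, $0$) such that $f(g+h)=fg+fh$ and $f0=0$; a map $h$ is additive if $(f+g)h=fh+gh$ and $0h=0$. A Cartesian left additive category is a left additive category with finite products in which all projections are additive. $\mathsf{CLAC}$ is the category of Cartesian left additive categories and functors preserving finite products strictly ($\mathsf{F}(A\times B)=\mathsf{F}A\times\mathsf{F}B$, terminal object preserved, $\mathsf{F}(\pi_j)=\pi_j$) and preserving $+$ and $0$ (strict Cartesian left additive functors). A Cartesian differential category is a Cartesian left additive category with a combinator $\mathsf{D}$ sending $f:A\to B$ to $\mathsf{D}[f]:A\times A\to B$ such that: [CD.1] $\mathsf{D}[f+g]=\mathsf{D}[f]+\mathsf{D}[g]$, $\mathsf{D}[0]=0$; [CD.2] $(1\times(\pi_0+\pi_1))\mathsf{D}[f]=(1\times\pi_0)\mathsf{D}[f]+(1\times\pi_1)\mathsf{D}[f]$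 (with $1\times(\pi_0+\pi_1),1\times\pi_j:A\times(A\times A)\to A\times A$) and $\langle 1,0\rangle\mathsf{D}[f]=0$; [CD.3] $\mathsf{D}[1]=\pi_1$, $\mathsf{D}[\pi_j]=\pi_1\pi_j$; [CD.4] $\mathsf{D}[\langle f,g\rangle]=\langle\mathsf{D}[f],\mathsf{D}[g]\rangle$; [CD.5] $\mathsf{D}[fg]=\langle\pi_0f,\mathsf{D}[f]\rangle\mathsf{D}[g]$; [CD.6] $\ell\,\mathsf{D}[\mathsf{D}[f]]=\mathsf{D}[f]$ where $\ell=\langle1,0\rangle\times\langle0,1\rangle:A\times A\to(A\times A)\times(A\times A)$; [CD.7] $c\,\mathsf{D}[\mathsf{D}[f]]=\mathsf{D}[\mathsf{D}[f]]$ where $c=\langle\langle\pi_0\pi_0,\pi_1\pi_0\rangle,\langle\pi_0\pi_1,\pi_1\pi_1\rangle\rangle$ on $(A\times A)\times(A\times A)$ swaps the two middle components. A strict Cartesian differential functor is a strict Cartesian left additive functor with $\mathsf{F}(\mathsf{D}[f])=\mathsf{D}[\mathsf{F}(f)]$. Pre-$\mathsf{D}$-sequences: in a category $\mathbb{X}$ with finite products put $\mathsf{P}(A)=A\times A$, $\mathsf{P}(f)=f\times f$. A pre-$\mathsf{D}$-sequence $f_\bullet:A\to B$ is a sequence $(f_0,f_1,\dots)$ with $f_n:\mathsf{P}^n(A)\to B$. For $h:A'\to A$, $k:B\to C$: $(h\cdot f_\bullet)_n=\mathsf{P}^n(h)f_n$, $(f_\bullet\cdot k)_n=f_nk$. Tangent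 $\mathsf{T}(f_\bullet):\mathsf{P}(A)\to\mathsf{P}(B)$, $\mathsf{T}(f_\bullet)_n=\langle\mathsf{P}^n(\pi_0)f_n,f_{n+1}\rangle$; differential $\mathsf{D}[f_\bullet]:\mathsf{P}(A)\to B$, $\mathsf{D}[f_\bullet]_n=f_{n+1}$. Identity $i_\bullet$: $i_0=1$, $i_n=\pi_1\cdots\pi_1$ ($n$ times). Composition $(f_\bullet\ast g_\bullet)_n=\mathsf{T}^n(f_\bullet)_0\,g_n$. Products: projections $i_\bullet\cdot\pi_j$, pairing $\langle f_\bullet,g_\bullet\rangle_n=\langle f_n,g_n\rangle$; additive structure pointwise ($0_n=0$, $(f_\bullet+g_\bullet)_n=f_n+g_n$). A $\mathsf{D}$-sequence (in a Cartesian left additive category) is a pre-$\mathsf{D}$-sequence with, for all $n$: [DS.1] $\langle1,0\rangle\cdot\mathsf{D}^{n+1}[f_\bullet]=0_\bullet$; [DS.2] $(1\times(\pi_0+\pi_1))\cdot\mathsf{D}^{n+1}[f_\bullet]=((1\times\pi_0)\cdot\mathsf{D}^{n+1}[f_\bullet])+((1\times\pi_1)\cdot\mathsf{D}^{n+1}[f_\bullet])$; [DS.3] $\ell\cdot\mathsf{D}^{n+2}[f_\bullet]=\mathsf{D}^{n+1}[f_\bullet]$; [DS.4] $c\cdot\mathsf{D}^{n+2}[f_\bullet]=\mathsf{D}^{n+2}[f_\bullet]$ (with $\langle1,0\rangle,1\times\pi_j,\ell,c$ the maps above for the object $\mathsf{P}^n(A)$). $\mathcal{D}[\mathbb{X}]$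 is the category of objects of $\mathbb{X}$ and $\mathsf{D}$-sequences, with identity $i_\bullet$, composition $\ast$, and the products and addition above. The comonad: $\mathcal{D}[\mathsf{F}](f_\bullet)_n=\mathsf{F}(f_n)$; $\varepsilon:\mathcal{D}[\mathbb{X}]\to\mathbb{X}$ is the identity on objects and $f_\bullet\mapsto f_0$; $\delta:\mathcal{D}[\mathbb{X}]\to\mathcal{D}[\mathcal{D}[\mathbb{X}]]$ is the identity on objects and sends $f_\bullet$ to the sequence with $0$-th term $f_\bullet$ and $n$-th term $\mathsf{D}^n[f_\bullet]$. A $\mathcal{D}$-coalgebra is $(\mathbb{X},\omega)$ with $\omega:\mathbb{X}\to\mathcal{D}[\mathbb{X}]$ a strict Cartesian left additive functor with $\omega\varepsilon=1$ and $\omega\delta=\omega\,\mathcal{D}[\omega]$; a morphism $(\mathbb{X},\omega)\to(\mathbb{Y},\omega')$ is a strict Cartesian left additive functor $\mathsf{F}$ with $\mathsf{F}\omega'=\omega\,\mathcal{D}[\mathsf{F}]$. *)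

theory Defs
  imports Main
begin

section \<open>Categories with chosen finite products and left additive structure\<close>

text \<open>Composition is written in diagrammatic order: ccmp X f g = fg (first f, then g).\<close>

record ('o, 'm) clac =
  cOb   :: "'o set"
  cArr  :: "'m set"
  cdom  :: "'m \<Rightarrow> 'o"
  ccod  :: "'m \<Rightarrow> 'o"
  ccmp  :: "'m \<Rightarrow> 'm \<Rightarrow> 'm"
  cid   :: "'o \<Rightarrow> 'm"
  cprd  :: "'o \<Rightarrow> 'o \<Rightarrow> 'o"
  ctrm  :: "'o"
  cpr0  :: "'o \<Rightarrow> 'o \<Rightarrow> 'm"
  cpr1  :: "'o \<Rightarrow> 'o \<Rightarrow> 'm"
  cpair :: "'m \<Rightarrow> 'm \<Rightarrow> 'm"
  cadd  :: "'m \<Rightarrow> 'm \<Rightarrow> 'm"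
  czero :: "'o \<Rightarrow> 'o \<Rightarrow> 'm"

definition Hom :: "('o, 'm, 'z) clac_scheme \<Rightarrow> 'o \<Rightarrow> 'o \<Rightarrow> 'm set" where
  "Hom X A B = {f \<in> cArr X. cdom X f = A \<and> ccod X f = B}"

definition is_category :: "('o, 'm, 'z) clac_scheme \<Rightarrow> bool" where
  "is_category X \<longleftrightarrow>
     (\<forall>f \<in> cArr X. cdom X f \<in> cOb X \<and> ccod X f \<in> cOb X) \<and>
     (\<forall>A \<in> cOb X. cid X A \<in> Hom X A A) \<and>
     (\<forall>A \<in> cOb X. \<forall>B \<in> cOb X. \<forall>C \<in> cOb X. \<forall>f \<in> Hom X A B. \<forall>g \<in> Hom X B C.
        ccmp X f g \<in> Hom X A C) \<and>
     (\<forall>A \<in> cOb X. \<forall>B \<in> cOb X. \<forall>C \<in> cOb X. \<forall>E \<in> cOb X.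
        \<forall>f \<in> Hom X A B. \<forall>g \<in> Hom X B C. \<forall>h \<in> Hom X C E.
        ccmp X (ccmp X f g) h = ccmp X f (ccmp X g h)) \<and>
     (\<forall>A \<in> cOb X. \<forall>B \<in> cOb X. \<forall>f \<in> Hom X A B.
        ccmp X (cid X A) f = f \<and> ccmp X f (cid X B) = f)"

definition has_finite_products :: "('o, 'm, 'z) clac_scheme \<Rightarrow> bool" where
  "has_finite_products X \<longleftrightarrow>
     ctrm X \<in> cOb X \<and>
     (\<forall>A \<in> cOb X. \<exists>!h. h \<in> Hom X A (ctrm X)) \<and>
     (\<forall>A \<in> cOb X. \<forall>B \<in> cOb X.
        cprd X A B \<in> cOb X \<and>
        cpr0 X A B \<in> Hom X (cprd X A B) A \<and>
        cpr1 X A B \<in> Hom X (cprd X A B) B \<and>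
        (\<forall>C \<in> cOb X. \<forall>f \<in> Hom X C A. \<forall>g \<in> Hom X C B.
           cpair X f g \<in> Hom X C (cprd X A B) \<and>
           ccmp X (cpair X f g) (cpr0 X A B) = f \<and>
           ccmp X (cpair X f g) (cpr1 X A B) = g) \<and>
        (\<forall>C \<in> cOb X. \<forall>h \<in> Hom X C (cprd X A B).
           h = cpair X (ccmp X h (cpr0 X A B)) (ccmp X h (cpr1 X A B))))"

definition is_left_additive :: "('o, 'm, 'z) clac_scheme \<Rightarrow> bool" where
  "is_left_additive X \<longleftrightarrow>
     (\<forall>A \<in> cOb X. \<forall>B \<in> cOb X.
        czero X A B \<in> Hom X A B \<and>
        (\<forall>f \<in> Hom X A B. \<forall>g \<in> Hom X A B.
           cadd X f g \<in> Hom X A B \<and> cadd X f g = cadd X g f) \<and>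
        (\<forall>f \<in> Hom X A B. \<forall>g \<in> Hom X A B. \<forall>h \<in> Hom X A B.
           cadd X (cadd X f g) h = cadd X f (cadd X g h)) \<and>
        (\<forall>f \<in> Hom X A B. cadd X f (czero X A B) = f)) \<and>
     (\<forall>A \<in> cOb X. \<forall>B \<in> cOb X. \<forall>C \<in> cOb X. \<forall>f \<in> Hom X A B.
        (\<forall>g \<in> Hom X B C. \<forall>h \<in> Hom X B C.
           ccmp X f (cadd X g h) = cadd X (ccmp X f g) (ccmp X f h)) \<and>
        ccmp X f (czero X B C) = czero X A C)"

definition is_additive_map :: "('o, 'm, 'z) clac_scheme \<Rightarrow> 'o \<Rightarrow> 'o \<Rightarrow> 'm \<Rightarrow> bool" where
  "is_additive_map X B C h \<longleftrightarrow>
     (\<forall>A \<in> cOb X. (\<forall>f \<in> Hom X A B. \<forall>g \<in> Hom X A B.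
          ccmp X (cadd X f g) h = cadd X (ccmp X f h) (ccmp X g h)) \<and>
        ccmp X (czero X A B) h = czero X A C)"

definition is_clac :: "('o, 'm, 'z) clac_scheme \<Rightarrow> bool" where
  "is_clac X \<longleftrightarrow> is_category X \<and> has_finite_products X \<and> is_left_additive X \<and>
     (\<forall>A \<in> cOb X. \<forall>B \<in> cOb X.
        is_additive_map X (cprd X A B) A (cpr0 X A B) \<and>
        is_additive_map X (cprd X A B) B (cpr1 X A B))"

definition strict_cla_functor ::
  "('o, 'm, 'z) clac_scheme \<Rightarrow> ('p, 'n, 'y) clac_scheme \<Rightarrow> ('o \<Rightarrow> 'p) \<Rightarrow> ('m \<Rightarrow> 'n) \<Rightarrow> bool" where
  "strict_cla_functor X Y Fo Fm \<longleftrightarrow>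
     (\<forall>A \<in> cOb X. Fo A \<in> cOb Y) \<and>
     (\<forall>A \<in> cOb X. \<forall>B \<in> cOb X. \<forall>f \<in> Hom X A B. Fm f \<in> Hom Y (Fo A) (Fo B)) \<and>
     (\<forall>A \<in> cOb X. Fm (cid X A) = cid Y (Fo A)) \<and>
     (\<forall>A \<in> cOb X. \<forall>B \<in> cOb X. \<forall>C \<in> cOb X. \<forall>f \<in> Hom X A B. \<forall>g \<in> Hom X B C.
        Fm (ccmp X f g) = ccmp Y (Fm f) (Fm g)) \<and>
     Fo (ctrm X) = ctrm Y \<and>
     (\<forall>A \<in> cOb X. \<forall>B \<in> cOb X.
        Fo (cprd X A B) = cprd Y (Fo A) (Fo B) \<and>
        Fm (cpr0 X A B) = cpr0 Y (Fo A) (Fo B) \<and>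
        Fm (cpr1 X A B) = cpr1 Y (Fo A) (Fo B) \<and>
        Fm (czero X A B) = czero Y (Fo A) (Fo B) \<and>
        (\<forall>f \<in> Hom X A B. \<forall>g \<in> Hom X A B. Fm (cadd X f g) = cadd Y (Fm f) (Fm g)))"

definition Pob :: "('o, 'm, 'z) clac_scheme \<Rightarrow> 'o \<Rightarrow> 'o" where
  "Pob X A = cprd X A A"

definition Pnob :: "('o, 'm, 'z) clac_scheme \<Rightarrow> nat \<Rightarrow> 'o \<Rightarrow> 'o" where
  "Pnob X n A = (Pob X ^^ n) A"

definition Pmap :: "('o, 'm, 'z) clac_scheme \<Rightarrow> 'm \<Rightarrow> 'm" where
  "Pmap X h = (let A = cdom X h in
      cpair X (ccmp X (cpr0 X A A) h) (ccmp X (cpr1 X A A) h))"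

definition Pnmap :: "('o, 'm, 'z) clac_scheme \<Rightarrow> nat \<Rightarrow> 'm \<Rightarrow> 'm" where
  "Pnmap X n h = (Pmap X ^^ n) h"

definition one_times :: "('o, 'm, 'z) clac_scheme \<Rightarrow> 'o \<Rightarrow> 'm \<Rightarrow> 'm" where
  "one_times X A h = cpair X (cpr0 X A (Pob X A)) (ccmp X (cpr1 X A (Pob X A)) h)"

definition inj0 :: "('o, 'm, 'z) clac_scheme \<Rightarrow> 'o \<Rightarrow> 'm" where
  "inj0 X A = cpair X (cid X A) (czero X A A)"

definition inj1 :: "('o, 'm, 'z) clac_scheme \<Rightarrow> 'o \<Rightarrow> 'm" where
  "inj1 X A = cpair X (czero X A A) (cid X A)"

definition ell :: "('o, 'm, 'z) clac_scheme \<Rightarrow> 'o \<Rightarrow> 'm" where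
  "ell X A = cpair X (ccmp X (cpr0 X A A) (inj0 X A)) (ccmp X (cpr1 X A A) (inj1 X A))"

definition cswap :: "('o, 'm, 'z) clac_scheme \<Rightarrow> 'o \<Rightarrow> 'm" where
  "cswap X A = (let E = Pob X A in
     cpair X
       (cpair X (ccmp X (cpr0 X E E) (cpr0 X A A)) (ccmp X (cpr1 X E E) (cpr0 X A A)))
       (cpair X (ccmp X (cpr0 X E E) (cpr1 X A A)) (ccmp X (cpr1 X E E) (cpr1 X A A))))"

section \<open>Cartesian differential categories\<close>

definition is_cdc :: "('o, 'm, 'z) clac_scheme \<Rightarrow> ('m \<Rightarrow> 'm) \<Rightarrow> bool" where
  "is_cdc X D \<longleftrightarrow> is_clac X \<and>
     (\<forall>A \<in> cOb X. \<forall>B \<in> cOb X. \<forall>f \<in> Hom X A B. D f \<in> Hom X (Pob X A) B) \<and>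
     \<comment> \<open>CD.1\<close>
     (\<forall>A \<in> cOb X. \<forall>B \<in> cOb X.
        (\<forall>f \<in> Hom X A B. \<forall>g \<in> Hom X A B. D (cadd X f g) = cadd X (D f) (D g)) \<and>
        D (czero X A B) = czero X (Pob X A) B) \<and>
     \<comment> \<open>CD.2\<close>
     (\<forall>A \<in> cOb X. \<forall>B \<in> cOb X. \<forall>f \<in> Hom X A B.
        ccmp X (one_times X A (cadd X (cpr0 X A A) (cpr1 X A A))) (D f) =
          cadd X (ccmp X (one_times X A (cpr0 X A A)) (D f))
                 (ccmp X (one_times X A (cpr1 X A A)) (D f)) \<and>
        ccmp X (inj0 X A) (D f) = czero X A B) \<and>
     \<comment> \<open>CD.3\<close>
     (\<forall>A \<in> cOb X. D (cid X A) = cpr1 X A A) \<and>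
     (\<forall>A \<in> cOb X. \<forall>B \<in> cOb X.
        D (cpr0 X A B) = ccmp X (cpr1 X (cprd X A B) (cprd X A B)) (cpr0 X A B) \<and>
        D (cpr1 X A B) = ccmp X (cpr1 X (cprd X A B) (cprd X A B)) (cpr1 X A B)) \<and>
     \<comment> \<open>CD.4\<close>
     (\<forall>A \<in> cOb X. \<forall>B \<in> cOb X. \<forall>C \<in> cOb X. \<forall>f \<in> Hom X C A. \<forall>g \<in> Hom X C B.
        D (cpair X f g) = cpair X (D f) (D g)) \<and>
     \<comment> \<open>CD.5\<close>
     (\<forall>A \<in> cOb X. \<forall>B \<in> cOb X. \<forall>C \<in> cOb X. \<forall>f \<in> Hom X A B. \<forall>g \<in> Hom X B C.
        D (ccmp X f g) = ccmp X (cpair X (ccmp X (cpr0 X A A) f) (D f)) (D g)) \<and>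
     \<comment> \<open>CD.6 and CD.7\<close>
     (\<forall>A \<in> cOb X. \<forall>B \<in> cOb X. \<forall>f \<in> Hom X A B.
        ccmp X (ell X A) (D (D f)) = D f \<and>
        ccmp X (cswap X A) (D (D f)) = D (D f))"

definition strict_cd_functor ::
  "('o, 'm, 'z) clac_scheme \<Rightarrow> ('p, 'n, 'y) clac_scheme \<Rightarrow> ('m \<Rightarrow> 'm) \<Rightarrow> ('n \<Rightarrow> 'n)
     \<Rightarrow> ('o \<Rightarrow> 'p) \<Rightarrow> ('m \<Rightarrow> 'n) \<Rightarrow> bool" where
  "strict_cd_functor X Y D D' Fo Fm \<longleftrightarrow> strict_cla_functor X Y Fo Fm \<and>
     (\<forall>f \<in> cArr X. Fm (D f) = D' (Fm f))"

section \<open>Pre-D-sequences and D-sequences\<close>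

text \<open>A (pre-)D-sequence is represented as f :: nat \<Rightarrow> 'm, f n : P^n(A) \<rightarrow> B.\<close>

definition dotL :: "('o, 'm, 'z) clac_scheme \<Rightarrow> 'm \<Rightarrow> (nat \<Rightarrow> 'm) \<Rightarrow> nat \<Rightarrow> 'm" where
  "dotL X h f = (\<lambda>n. ccmp X (Pnmap X n h) (f n))"

definition dotR :: "('o, 'm, 'z) clac_scheme \<Rightarrow> (nat \<Rightarrow> 'm) \<Rightarrow> 'm \<Rightarrow> nat \<Rightarrow> 'm" where
  "dotR X f k = (\<lambda>n. ccmp X (f n) k)"

definition Dseq_pow :: "nat \<Rightarrow> (nat \<Rightarrow> 'm) \<Rightarrow> nat \<Rightarrow> 'm" where
  "Dseq_pow k f = (\<lambda>n. f (n + k))"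

definition zero_seq :: "('o, 'm, 'z) clac_scheme \<Rightarrow> 'o \<Rightarrow> 'o \<Rightarrow> nat \<Rightarrow> 'm" where
  "zero_seq X A B = (\<lambda>n. czero X (Pnob X n A) B)"

definition add_seq :: "('o, 'm, 'z) clac_scheme \<Rightarrow> (nat \<Rightarrow> 'm) \<Rightarrow> (nat \<Rightarrow> 'm) \<Rightarrow> nat \<Rightarrow> 'm" where
  "add_seq X f g = (\<lambda>n. cadd X (f n) (g n))"

fun iseq :: "('o, 'm, 'z) clac_scheme \<Rightarrow> 'o \<Rightarrow> nat \<Rightarrow> 'm" where
  "iseq X A 0 = cid X A"
| "iseq X A (Suc n) = ccmp X (cpr1 X (Pnob X n A) (Pnob X n A)) (iseq X A n)"

definition Tan :: "('o, 'm, 'z) clac_scheme \<Rightarrow> (nat \<Rightarrow> 'm) \<Rightarrow> nat \<Rightarrow> 'm" where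
  "Tan X f = (let A = cdom X (f 0) in
     (\<lambda>n. cpair X (ccmp X (Pnmap X n (cpr0 X A A)) (f n)) (f (Suc n))))"

definition Tpow :: "('o, 'm, 'z) clac_scheme \<Rightarrow> nat \<Rightarrow> (nat \<Rightarrow> 'm) \<Rightarrow> nat \<Rightarrow> 'm" where
  "Tpow X k f = (Tan X ^^ k) f"

definition Dcmp :: "('o, 'm, 'z) clac_scheme \<Rightarrow> (nat \<Rightarrow> 'm) \<Rightarrow> (nat \<Rightarrow> 'm) \<Rightarrow> nat \<Rightarrow> 'm" where
  "Dcmp X f g = (\<lambda>n. ccmp X (Tpow X n f 0) (g n))"

definition is_Dseq :: "('o, 'm, 'z) clac_scheme \<Rightarrow> 'o \<Rightarrow> 'o \<Rightarrow> (nat \<Rightarrow> 'm) \<Rightarrow> bool" where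
  "is_Dseq X A B f \<longleftrightarrow>
     (\<forall>n. f n \<in> Hom X (Pnob X n A) B) \<and>
     (\<forall>n. let E = Pnob X n A; g = Dseq_pow (Suc n) f; g2 = Dseq_pow (Suc (Suc n)) f in
        \<comment> \<open>DS.1\<close>
        dotL X (inj0 X E) g = zero_seq X E B \<and>
        \<comment> \<open>DS.2\<close>
        dotL X (one_times X E (cadd X (cpr0 X E E) (cpr1 X E E))) g =
          add_seq X (dotL X (one_times X E (cpr0 X E E)) g)
                    (dotL X (one_times X E (cpr1 X E E)) g) \<and>
        \<comment> \<open>DS.3\<close>
        dotL X (ell X E) g2 = g \<and>
        \<comment> \<open>DS.4\<close>
        dotL X (cswap X E) g2 = g2)"

section \<open>The category \<D>[X]\<close>

definition Dcat :: "('o, 'm, 'z) clac_scheme \<Rightarrow> ('o, nat \<Rightarrow> 'm) clac" where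
  "Dcat X = \<lparr>
     cOb = cOb X,
     cArr = {f. is_Dseq X (cdom X (f 0)) (ccod X (f 0)) f},
     cdom = (\<lambda>f. cdom X (f 0)),
     ccod = (\<lambda>f. ccod X (f 0)),
     ccmp = Dcmp X,
     cid = iseq X,
     cprd = cprd X,
     ctrm = ctrm X,
     cpr0 = (\<lambda>A B. dotR X (iseq X (cprd X A B)) (cpr0 X A B)),
     cpr1 = (\<lambda>A B. dotR X (iseq X (cprd X A B)) (cpr1 X A B)),
     cpair = (\<lambda>f g n. cpair X (f n) (g n)),
     cadd = add_seq X,
     czero = zero_seq X \<rparr>"

text \<open>Comonad structure: \<epsilon>(f) = f_0, \<delta>(f) = (f, D[f], D^2[f], ...),
  \<D>[F](f)_n = F(f_n).\<close>

definition eps :: "(nat \<Rightarrow> 'm) \<Rightarrow> 'm" where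
  "eps f = f 0"

definition delta :: "(nat \<Rightarrow> 'm) \<Rightarrow> nat \<Rightarrow> nat \<Rightarrow> 'm" where
  "delta f = (\<lambda>k. Dseq_pow k f)"

definition Dmap :: "('m \<Rightarrow> 'n) \<Rightarrow> (nat \<Rightarrow> 'm) \<Rightarrow> nat \<Rightarrow> 'n" where
  "Dmap Fm f = (\<lambda>n. Fm (f n))"

section \<open>Coalgebras\<close>

text \<open>(X, \<omega>) with \<omega> = (wo, wm) : X \<rightarrow> \<D>[X] strict Cartesian left additive,
  \<omega>\<epsilon> = 1 and \<omega>\<delta> = \<omega>\<D>[\<omega>] (both as functors, i.e. on objects and arrows;
  \<epsilon> and \<delta> are the identity on objects and \<D>[\<omega>] acts as wo on objects).\<close>

definition is_coalgebra :: "('o, 'm, 'z) clac_scheme \<Rightarrow> ('o \<Rightarrow> 'o) \<Rightarrow> ('m \<Rightarrow> nat \<Rightarrow> 'm) \<Rightarrow> bool" where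
  "is_coalgebra X wo wm \<longleftrightarrow>
     strict_cla_functor X (Dcat X) wo wm \<and>
     (\<forall>A \<in> cOb X. wo A = A) \<and>
     (\<forall>f \<in> cArr X. eps (wm f) = f) \<and>
     (\<forall>A \<in> cOb X. wo A = wo (wo A)) \<and>
     (\<forall>f \<in> cArr X. delta (wm f) = Dmap wm (wm f))"

definition coalg_morphism ::
  "('o, 'm, 'z) clac_scheme \<Rightarrow> ('p, 'n, 'y) clac_scheme \<Rightarrow>
   ('o \<Rightarrow> 'o) \<Rightarrow> ('m \<Rightarrow> nat \<Rightarrow> 'm) \<Rightarrow> ('p \<Rightarrow> 'p) \<Rightarrow> ('n \<Rightarrow> nat \<Rightarrow> 'n) \<Rightarrow>
   ('o \<Rightarrow> 'p) \<Rightarrow> ('m \<Rightarrow> 'n) \<Rightarrow> bool" where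
  "coalg_morphism X Y wo wm wo' wm' Fo Fm \<longleftrightarrow>
     strict_cla_functor X Y Fo Fm \<and>
     (\<forall>A \<in> cOb X. wo' (Fo A) = Fo (wo A)) \<and>
     (\<forall>f \<in> cArr X. wm' (Fm f) = Dmap Fm (wm f))"

definition omegaD :: "('m \<Rightarrow> 'm) \<Rightarrow> 'm \<Rightarrow> nat \<Rightarrow> 'm" where
  "omegaD D f = (\<lambda>n. (D ^^ n) f)"

definition Domega :: "('m \<Rightarrow> nat \<Rightarrow> 'm) \<Rightarrow> 'm \<Rightarrow> 'm" where
  "Domega wm f = wm f 1"

end

theory Submission
  imports Defs
begin

(* The higher derivatives (f, D[f], D^2[f], ...) of a map form a D-sequence because every
   structure map occurring in the D-sequence axioms (<1,0>, 1 x pi_j, ell, c, P^n(pi_0)) is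
   linear, D[h] = pi_1 h, and D^n[h g] = P^n(h) D^n[g] for linear h: the axioms at level n are
   the n-th derivatives of CD.2, CD.6 and CD.7.  Composition in D[X] is matched by the iterated
   chain rule D^n[f g] = T^n(f)_0 D^n[g].  Conversely, coassociativity of a coalgebra omega
   gives omega(f)_(n+1) = omega(omega(f)_1)_n, so omega is recovered from D^omega[f] = omega(f)_1,
   whose axioms are the level-0 D-sequence axioms plus functoriality of omega.  A functor
   commuting with D commutes with every D^n, which identifies coalgebra morphisms with strict
   Cartesian differential functors. *)

section \<open>Cartesian left additive categories\<close>

lemma Pnob_0 [simp]: "Pnob X 0 A = A"
  by (simp add: Pnob_def)

lemma Pnmap_0 [simp]: "Pnmap X 0 h = h"
  by (simp add: Pnmap_def)

locale cartesian_left_additive =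
  fixes X :: "('o, 'm, 'z) clac_scheme"
  assumes clac: "is_clac X"
begin

lemma Hom_obs: "f \<in> Hom X A B \<Longrightarrow> A \<in> cOb X \<and> B \<in> cOb X"
  using clac unfolding is_clac_def is_category_def Hom_def by auto

lemma Hom_dom: "f \<in> Hom X A B \<Longrightarrow> cdom X f = A"
  by (simp add: Hom_def)

lemma arr_Hom: "f \<in> cArr X \<Longrightarrow> f \<in> Hom X (cdom X f) (ccod X f)"
  by (simp add: Hom_def)

lemma Hom_arr: "f \<in> Hom X A B \<Longrightarrow> f \<in> cArr X"
  by (simp add: Hom_def)

lemma id_Hom: "A \<in> cOb X \<Longrightarrow> cid X A \<in> Hom X A A"
  using clac unfolding is_clac_def is_category_def by auto

lemma comp_Hom: "f \<in> Hom X A B \<Longrightarrow> g \<in> Hom X B C \<Longrightarrow> ccmp X f g \<in> Hom X A C"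
  using clac Hom_obs unfolding is_clac_def is_category_def by metis

lemma comp_assoc:
  "f \<in> Hom X A B \<Longrightarrow> g \<in> Hom X B C \<Longrightarrow> h \<in> Hom X C E \<Longrightarrow>
   ccmp X (ccmp X f g) h = ccmp X f (ccmp X g h)"
  using clac Hom_obs unfolding is_clac_def is_category_def by metis

lemma id_left: "f \<in> Hom X A B \<Longrightarrow> ccmp X (cid X A) f = f"
  using clac Hom_obs unfolding is_clac_def is_category_def by metis

lemma id_right: "f \<in> Hom X A B \<Longrightarrow> ccmp X f (cid X B) = f"
  using clac Hom_obs unfolding is_clac_def is_category_def by metis

lemma prd_ob: "A \<in> cOb X \<Longrightarrow> B \<in> cOb X \<Longrightarrow> cprd X A B \<in> cOb X"
  using clac unfolding is_clac_def has_finite_products_def by auto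

lemma pr0_Hom: "A \<in> cOb X \<Longrightarrow> B \<in> cOb X \<Longrightarrow> cpr0 X A B \<in> Hom X (cprd X A B) A"
  using clac unfolding is_clac_def has_finite_products_def by auto

lemma pr1_Hom: "A \<in> cOb X \<Longrightarrow> B \<in> cOb X \<Longrightarrow> cpr1 X A B \<in> Hom X (cprd X A B) B"
  using clac unfolding is_clac_def has_finite_products_def by auto

lemma pair_Hom: "f \<in> Hom X C A \<Longrightarrow> g \<in> Hom X C B \<Longrightarrow> cpair X f g \<in> Hom X C (cprd X A B)"
  using clac Hom_obs unfolding is_clac_def has_finite_products_def by metis

lemma pair_pr0: "f \<in> Hom X C A \<Longrightarrow> g \<in> Hom X C B \<Longrightarrow> ccmp X (cpair X f g) (cpr0 X A B) = f"
  using clac Hom_obs unfolding is_clac_def has_finite_products_def by metis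

lemma pair_pr1: "f \<in> Hom X C A \<Longrightarrow> g \<in> Hom X C B \<Longrightarrow> ccmp X (cpair X f g) (cpr1 X A B) = g"
  using clac Hom_obs unfolding is_clac_def has_finite_products_def by metis

lemma pair_unique:
  "h \<in> Hom X C (cprd X A B) \<Longrightarrow> A \<in> cOb X \<Longrightarrow> B \<in> cOb X \<Longrightarrow>
   ccmp X h (cpr0 X A B) = f \<Longrightarrow> ccmp X h (cpr1 X A B) = g \<Longrightarrow> h = cpair X f g"
  using clac Hom_obs unfolding is_clac_def has_finite_products_def by metis

lemma comp_pair:
  assumes k: "k \<in> Hom X C' C" and f: "f \<in> Hom X C A" and g: "g \<in> Hom X C B"
  shows "ccmp X k (cpair X f g) = cpair X (ccmp X k f) (ccmp X k g)"
proof (rule pair_unique)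
  have A: "A \<in> cOb X" and B: "B \<in> cOb X" using f g Hom_obs by auto
  show "ccmp X (ccmp X k (cpair X f g)) (cpr0 X A B) = ccmp X k f"
    using comp_assoc[OF k pair_Hom[OF f g] pr0_Hom[OF A B]] pair_pr0[OF f g] by simp
  show "ccmp X (ccmp X k (cpair X f g)) (cpr1 X A B) = ccmp X k g"
    using comp_assoc[OF k pair_Hom[OF f g] pr1_Hom[OF A B]] pair_pr1[OF f g] by simp
qed (use k f g Hom_obs in \<open>auto intro: comp_Hom pair_Hom\<close>)

lemma zero_Hom: "A \<in> cOb X \<Longrightarrow> B \<in> cOb X \<Longrightarrow> czero X A B \<in> Hom X A B"
  using clac unfolding is_clac_def is_left_additive_def by auto

lemma add_Hom: "f \<in> Hom X A B \<Longrightarrow> g \<in> Hom X A B \<Longrightarrow> cadd X f g \<in> Hom X A B"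
  using clac Hom_obs unfolding is_clac_def is_left_additive_def by metis

lemma comp_add:
  "k \<in> Hom X C A \<Longrightarrow> f \<in> Hom X A B \<Longrightarrow> g \<in> Hom X A B \<Longrightarrow>
   ccmp X k (cadd X f g) = cadd X (ccmp X k f) (ccmp X k g)"
  using clac Hom_obs unfolding is_clac_def is_left_additive_def by metis

lemma comp_zero: "k \<in> Hom X C A \<Longrightarrow> B \<in> cOb X \<Longrightarrow> ccmp X k (czero X A B) = czero X C B"
  using clac Hom_obs unfolding is_clac_def is_left_additive_def by metis

lemma Pob_ob: "A \<in> cOb X \<Longrightarrow> Pob X A \<in> cOb X"
  by (simp add: Pob_def prd_ob)

lemma Pnob_ob: "A \<in> cOb X \<Longrightarrow> Pnob X n A \<in> cOb X"
  by (induction n) (auto simp: Pnob_def Pob_ob)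

lemma strict_cla_functor_arr:
  assumes "strict_cla_functor X Y Fo Fm" and f: "f \<in> cArr X"
  shows "Fm f \<in> cArr Y"
proof -
  have "Fm f \<in> Hom Y (Fo (cdom X f)) (Fo (ccod X f))"
    using assms arr_Hom[OF f] Hom_obs[OF arr_Hom[OF f]] unfolding strict_cla_functor_def by blast
  then show ?thesis by (simp add: Hom_def)
qed

end

section \<open>Cartesian differential categories and linear maps\<close>

locale cartesian_differential =
  fixes X :: "('o, 'm, 'z) clac_scheme" and D :: "'m \<Rightarrow> 'm"
  assumes cdc: "is_cdc X D"

sublocale cartesian_differential \<subseteq> cartesian_left_additive
  using cdc by unfold_locales (simp add: is_cdc_def)

context cartesian_differential
begin

lemma D_Hom: "f \<in> Hom X A B \<Longrightarrow> D f \<in> Hom X (Pob X A) B"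
  using cdc Hom_obs unfolding is_cdc_def by (elim conjE) blast

lemma D_arr: "f \<in> cArr X \<Longrightarrow> D f \<in> cArr X"
  using D_Hom arr_Hom Hom_arr by blast

lemma D_add: "f \<in> Hom X A B \<Longrightarrow> g \<in> Hom X A B \<Longrightarrow> D (cadd X f g) = cadd X (D f) (D g)"
  using cdc Hom_obs unfolding is_cdc_def by (elim conjE) blast

lemma D_zero: "A \<in> cOb X \<Longrightarrow> B \<in> cOb X \<Longrightarrow> D (czero X A B) = czero X (Pob X A) B"
  using cdc unfolding is_cdc_def by (elim conjE) blast

lemma one_times_add_D:
  "f \<in> Hom X A B \<Longrightarrow>
   ccmp X (one_times X A (cadd X (cpr0 X A A) (cpr1 X A A))) (D f) =
     cadd X (ccmp X (one_times X A (cpr0 X A A)) (D f)) (ccmp X (one_times X A (cpr1 X A A)) (D f))"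
  using cdc Hom_obs unfolding is_cdc_def by (elim conjE) blast

lemma inj0_D: "f \<in> Hom X A B \<Longrightarrow> ccmp X (inj0 X A) (D f) = czero X A B"
  using cdc Hom_obs unfolding is_cdc_def by (elim conjE) blast

lemma D_id: "A \<in> cOb X \<Longrightarrow> D (cid X A) = cpr1 X A A"
  using cdc unfolding is_cdc_def by (elim conjE) blast

lemma D_pr0:
  "A \<in> cOb X \<Longrightarrow> B \<in> cOb X \<Longrightarrow> D (cpr0 X A B) = ccmp X (cpr1 X (cprd X A B) (cprd X A B)) (cpr0 X A B)"
  using cdc unfolding is_cdc_def by (elim conjE) blast

lemma D_pr1:
  "A \<in> cOb X \<Longrightarrow> B \<in> cOb X \<Longrightarrow> D (cpr1 X A B) = ccmp X (cpr1 X (cprd X A B) (cprd X A B)) (cpr1 X A B)"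
  using cdc unfolding is_cdc_def by (elim conjE) blast

lemma D_pair:
  assumes "f \<in> Hom X C A" and "g \<in> Hom X C B"
  shows "D (cpair X f g) = cpair X (D f) (D g)"
proof -
  have "A \<in> cOb X" "B \<in> cOb X" "C \<in> cOb X" using assms Hom_obs by auto
  with assms cdc show ?thesis unfolding is_cdc_def by (elim conjE) blast
qed

lemma D_comp:
  assumes "f \<in> Hom X A B" and "g \<in> Hom X B C"
  shows "D (ccmp X f g) = ccmp X (cpair X (ccmp X (cpr0 X A A) f) (D f)) (D g)"
proof -
  have "A \<in> cOb X" "B \<in> cOb X" "C \<in> cOb X" using assms Hom_obs by auto
  with assms cdc show ?thesis unfolding is_cdc_def by (elim conjE) (meson bspec)
qed

lemma ell_DD: "f \<in> Hom X A B \<Longrightarrow> ccmp X (ell X A) (D (D f)) = D f"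
  using cdc Hom_obs[of f A B] unfolding is_cdc_def by (elim conjE) (meson bspec)

lemma cswap_DD: "f \<in> Hom X A B \<Longrightarrow> ccmp X (cswap X A) (D (D f)) = D (D f)"
  using cdc Hom_obs[of f A B] unfolding is_cdc_def by (elim conjE) (meson bspec)

lemma Dn_Hom: "f \<in> Hom X A B \<Longrightarrow> (D ^^ n) f \<in> Hom X (Pnob X n A) B"
  by (induction n) (auto simp: Pnob_def D_Hom)

definition D_linear :: "'m \<Rightarrow> 'o \<Rightarrow> 'o \<Rightarrow> bool" where
  "D_linear h E F \<longleftrightarrow> h \<in> Hom X E F \<and> D h = ccmp X (cpr1 X E E) h"

lemma D_linear_Hom: "D_linear h E F \<Longrightarrow> h \<in> Hom X E F"
  by (simp add: D_linear_def)

lemma D_linear_D: "D_linear h E F \<Longrightarrow> D h = ccmp X (cpr1 X E E) h"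
  by (simp add: D_linear_def)

lemma D_linear_pr0: "A \<in> cOb X \<Longrightarrow> B \<in> cOb X \<Longrightarrow> D_linear (cpr0 X A B) (cprd X A B) A"
  by (simp add: D_linear_def D_pr0 pr0_Hom)

lemma D_linear_pr1: "A \<in> cOb X \<Longrightarrow> B \<in> cOb X \<Longrightarrow> D_linear (cpr1 X A B) (cprd X A B) B"
  by (simp add: D_linear_def D_pr1 pr1_Hom)

lemma D_linear_id: "A \<in> cOb X \<Longrightarrow> D_linear (cid X A) A A"
  using id_right[OF pr1_Hom[of A A]] by (simp add: D_linear_def D_id id_Hom)

lemma D_linear_zero: "A \<in> cOb X \<Longrightarrow> B \<in> cOb X \<Longrightarrow> D_linear (czero X A B) A B"
  using comp_zero[OF pr1_Hom[of A A]] by (simp add: D_linear_def D_zero zero_Hom Pob_def)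

lemma D_comp_D_linear_left:
  assumes h: "D_linear h E F" and g: "g \<in> Hom X F C"
  shows "D (ccmp X h g) = ccmp X (Pmap X h) (D g)"
  using D_comp[OF D_linear_Hom[OF h] g] D_linear_D[OF h] Hom_dom[OF D_linear_Hom[OF h]]
  by (simp add: Pmap_def Let_def)

lemma D_comp_D_linear_right:
  assumes h: "h \<in> Hom X A E" and g: "D_linear g E F"
  shows "D (ccmp X h g) = ccmp X (D h) g"
proof -
  have A: "A \<in> cOb X" and E: "E \<in> cOb X" using h Hom_obs by auto
  have h0: "ccmp X (cpr0 X A A) h \<in> Hom X (cprd X A A) E" and Dh: "D h \<in> Hom X (cprd X A A) E"
    using comp_Hom[OF pr0_Hom[OF A A] h] D_Hom[OF h] by (simp_all add: Pob_def)
  have "D (ccmp X h g) = ccmp X (cpair X (ccmp X (cpr0 X A A) h) (D h)) (ccmp X (cpr1 X E E) g)"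
    using D_comp[OF h D_linear_Hom[OF g]] D_linear_D[OF g] by simp
  also have "\<dots> = ccmp X (ccmp X (cpair X (ccmp X (cpr0 X A A) h) (D h)) (cpr1 X E E)) g"
    using comp_assoc[OF pair_Hom[OF h0 Dh] pr1_Hom[OF E E] D_linear_Hom[OF g]] by simp
  also have "\<dots> = ccmp X (D h) g"
    using pair_pr1[OF h0 Dh] by simp
  finally show ?thesis .
qed

lemma D_linear_comp:
  assumes h: "D_linear h E F" and k: "D_linear k F G"
  shows "D_linear (ccmp X h k) E G"
proof -
  have hh: "h \<in> Hom X E F" using h D_linear_Hom by blast
  have E: "E \<in> cOb X" using hh Hom_obs by auto
  have "D (ccmp X h k) = ccmp X (D h) k" using D_comp_D_linear_right[OF hh k] .
  also have "\<dots> = ccmp X (cpr1 X E E) (ccmp X h k)"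
    using D_linear_D[OF h] comp_assoc[OF pr1_Hom[OF E E] hh D_linear_Hom[OF k]] by simp
  finally show ?thesis using comp_Hom[OF hh D_linear_Hom[OF k]] by (simp add: D_linear_def)
qed

lemma D_linear_pair:
  assumes h: "D_linear h E F" and k: "D_linear k E G"
  shows "D_linear (cpair X h k) E (cprd X F G)"
proof -
  have hh: "h \<in> Hom X E F" and kk: "k \<in> Hom X E G" using h k D_linear_Hom by blast+
  have E: "E \<in> cOb X" using hh Hom_obs by auto
  show ?thesis
    using D_pair[OF hh kk] D_linear_D[OF h] D_linear_D[OF k] comp_pair[OF pr1_Hom[OF E E] hh kk]
      pair_Hom[OF hh kk]
    by (simp add: D_linear_def)
qed

lemma D_linear_add:
  assumes h: "D_linear h E F" and k: "D_linear k E F"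
  shows "D_linear (cadd X h k) E F"
proof -
  have hh: "h \<in> Hom X E F" and kk: "k \<in> Hom X E F" using h k D_linear_Hom by blast+
  have E: "E \<in> cOb X" using hh Hom_obs by auto
  show ?thesis
    using D_add[OF hh kk] D_linear_D[OF h] D_linear_D[OF k] comp_add[OF pr1_Hom[OF E E] hh kk]
      add_Hom[OF hh kk]
    by (simp add: D_linear_def)
qed

lemma D_linear_Pmap: "D_linear h E F \<Longrightarrow> D_linear (Pmap X h) (Pob X E) (Pob X F)"
  using Hom_obs[OF D_linear_Hom] Hom_dom[OF D_linear_Hom]
  unfolding Pmap_def Let_def Pob_def
  by (metis D_linear_pair D_linear_comp D_linear_pr0 D_linear_pr1)

lemma D_linear_inj0: "E \<in> cOb X \<Longrightarrow> D_linear (inj0 X E) E (Pob X E)"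
  unfolding inj0_def Pob_def by (intro D_linear_pair D_linear_id D_linear_zero)

lemma D_linear_inj1: "E \<in> cOb X \<Longrightarrow> D_linear (inj1 X E) E (Pob X E)"
  unfolding inj1_def Pob_def by (intro D_linear_pair D_linear_id D_linear_zero)

lemma D_linear_one_times:
  "E \<in> cOb X \<Longrightarrow> D_linear k (Pob X E) E \<Longrightarrow>
   D_linear (one_times X E k) (cprd X E (Pob X E)) (Pob X E)"
  unfolding one_times_def
  by (subst (3) Pob_def) (intro D_linear_pair D_linear_pr0 D_linear_comp[OF D_linear_pr1] Pob_ob)

lemma D_linear_ell: "E \<in> cOb X \<Longrightarrow> D_linear (ell X E) (Pob X E) (Pob X (Pob X E))"
  using D_linear_inj0 D_linear_inj1 unfolding ell_def Pob_def
  by (intro D_linear_pair D_linear_comp[OF D_linear_pr0] D_linear_comp[OF D_linear_pr1] prd_ob)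

lemma D_linear_cswap: "E \<in> cOb X \<Longrightarrow> D_linear (cswap X E) (Pob X (Pob X E)) (Pob X (Pob X E))"
  unfolding cswap_def Let_def Pob_def
  by (intro D_linear_pair D_linear_comp[OF D_linear_pr0] D_linear_comp[OF D_linear_pr1]
      D_linear_pr0 D_linear_pr1 prd_ob)

lemma D_linear_pr_sum:
  "E \<in> cOb X \<Longrightarrow> D_linear (cadd X (cpr0 X E E) (cpr1 X E E)) (Pob X E) E"
  unfolding Pob_def by (intro D_linear_add D_linear_pr0 D_linear_pr1)

section \<open>Higher derivatives and the chain rule\<close>

lemma Dn_comp_D_linear_left:
  "D_linear h E F \<Longrightarrow> g \<in> Hom X F C \<Longrightarrow>
   (D ^^ n) (ccmp X h g) = ccmp X (Pnmap X n h) ((D ^^ n) g)"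
proof (induction n arbitrary: h g E F C)
  case 0
  show ?case by (simp add: Pnmap_def)
next
  case (Suc n)
  have "(D ^^ Suc n) (ccmp X h g) = (D ^^ n) (ccmp X (Pmap X h) (D g))"
    using D_comp_D_linear_left[OF Suc.prems] by (simp add: funpow_Suc_right del: funpow.simps)
  also have "\<dots> = ccmp X (Pnmap X n (Pmap X h)) ((D ^^ n) (D g))"
    using Suc.IH[OF D_linear_Pmap[OF Suc.prems(1)] D_Hom[OF Suc.prems(2)]] .
  finally show ?case by (simp add: Pnmap_def funpow_Suc_right del: funpow.simps)
qed

lemma Dn_comp_D_linear_right:
  "h \<in> Hom X A E \<Longrightarrow> D_linear g E F \<Longrightarrow> (D ^^ n) (ccmp X h g) = ccmp X ((D ^^ n) h) g"
  by (induction n) (auto simp: D_comp_D_linear_right[OF Dn_Hom])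

lemma Dn_pair:
  "f \<in> Hom X C A \<Longrightarrow> g \<in> Hom X C B \<Longrightarrow> (D ^^ n) (cpair X f g) = cpair X ((D ^^ n) f) ((D ^^ n) g)"
  by (induction n) (auto simp: D_pair[OF Dn_Hom Dn_Hom])

lemma Dn_add:
  "f \<in> Hom X A B \<Longrightarrow> g \<in> Hom X A B \<Longrightarrow> (D ^^ n) (cadd X f g) = cadd X ((D ^^ n) f) ((D ^^ n) g)"
  by (induction n) (auto simp: D_add[OF Dn_Hom Dn_Hom])

lemma Dn_zero: "A \<in> cOb X \<Longrightarrow> B \<in> cOb X \<Longrightarrow> (D ^^ n) (czero X A B) = czero X (Pnob X n A) B"
  by (induction n) (auto simp: D_zero Pnob_def Pnob_ob[unfolded Pnob_def])

lemma D_linear_iseq: "A \<in> cOb X \<Longrightarrow> D_linear (iseq X A n) (Pnob X n A) A"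
proof (induction n)
  case 0
  then show ?case by (simp add: Pnob_def D_linear_id)
next
  case (Suc n)
  have "D_linear (ccmp X (cpr1 X (Pnob X n A) (Pnob X n A)) (iseq X A n))
          (cprd X (Pnob X n A) (Pnob X n A)) A"
    using Suc Pnob_ob by (intro D_linear_comp[OF D_linear_pr1]) auto
  then show ?case by (simp add: Pnob_def Pob_def)
qed

lemma Dn_id: "A \<in> cOb X \<Longrightarrow> (D ^^ n) (cid X A) = iseq X A n"
  by (induction n) (simp_all add: D_linear_D[OF D_linear_iseq])

definition tangent :: "'m \<Rightarrow> 'm" where
  "tangent h = cpair X (ccmp X (cpr0 X (cdom X h) (cdom X h)) h) (D h)"

lemma tangent_Hom: "h \<in> Hom X A B \<Longrightarrow> tangent h \<in> Hom X (Pob X A) (Pob X B)"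
  using Hom_obs[of h A B] D_Hom[of h A B]
  unfolding tangent_def Hom_dom[of h A B] Pob_def
  by (blast intro: pair_Hom comp_Hom pr0_Hom)

lemma D_comp_tangent: "f \<in> Hom X A B \<Longrightarrow> g \<in> Hom X B C \<Longrightarrow> D (ccmp X f g) = ccmp X (tangent f) (D g)"
  by (simp add: D_comp tangent_def Hom_dom)

lemma Dn_comp:
  "f \<in> Hom X A B \<Longrightarrow> g \<in> Hom X B C \<Longrightarrow>
   (D ^^ n) (ccmp X f g) = ccmp X ((tangent ^^ n) f) ((D ^^ n) g)"
proof (induction n arbitrary: f g A B C)
  case 0
  then show ?case by simp
next
  case (Suc n)
  have "(D ^^ Suc n) (ccmp X f g) = (D ^^ n) (ccmp X (tangent f) (D g))"
    using D_comp_tangent[OF Suc.prems] by (simp add: funpow_Suc_right del: funpow.simps)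
  also have "\<dots> = ccmp X ((tangent ^^ n) (tangent f)) ((D ^^ n) (D g))"
    using Suc.IH[OF tangent_Hom[OF Suc.prems(1)] D_Hom[OF Suc.prems(2)]] .
  finally show ?case by (simp add: funpow_Suc_right del: funpow.simps)
qed

lemma Tan_omegaD:
  assumes h: "h \<in> Hom X A B"
  shows "Tan X (omegaD D h) = omegaD D (tangent h)"
proof
  fix n
  have A: "A \<in> cOb X" using h Hom_obs by auto
  have "(D ^^ n) (tangent h) = cpair X ((D ^^ n) (ccmp X (cpr0 X A A) h)) ((D ^^ n) (D h))"
    unfolding tangent_def Hom_dom[OF h]
    using Dn_pair[OF comp_Hom[OF pr0_Hom[OF A A] h] D_Hom[OF h, unfolded Pob_def]] .
  also have "\<dots> = cpair X (ccmp X (Pnmap X n (cpr0 X A A)) ((D ^^ n) h)) ((D ^^ Suc n) h)"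
    using Dn_comp_D_linear_left[OF D_linear_pr0[OF A A] h]
    by (simp add: funpow_Suc_right del: funpow.simps)
  finally show "Tan X (omegaD D h) n = omegaD D (tangent h) n"
    by (simp add: Tan_def omegaD_def Hom_dom[OF h])
qed

lemma Tpow_omegaD: "h \<in> Hom X A B \<Longrightarrow> Tpow X n (omegaD D h) = omegaD D ((tangent ^^ n) h)"
proof (induction n arbitrary: h A B)
  case 0
  then show ?case by (simp add: Tpow_def)
next
  case (Suc n)
  have "Tpow X (Suc n) (omegaD D h) = Tpow X n (omegaD D (tangent h))"
    using Tan_omegaD[OF Suc.prems] by (simp add: Tpow_def funpow_Suc_right del: funpow.simps)
  also have "\<dots> = omegaD D ((tangent ^^ n) (tangent h))"
    using Suc.IH[OF tangent_Hom[OF Suc.prems]] .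
  finally show ?case by (simp add: funpow_Suc_right del: funpow.simps)
qed

end

section \<open>The coalgebra of higher derivatives\<close>

lemma Dseq_pow_omegaD: "Dseq_pow k (omegaD D f) = omegaD D ((D ^^ k) f)"
  by (simp add: Dseq_pow_def omegaD_def funpow_add)

lemma Dcat_simps [simp]:
  "cOb (Dcat X) = cOb X"
  "cArr (Dcat X) = {f. is_Dseq X (cdom X (f 0)) (ccod X (f 0)) f}"
  "cdom (Dcat X) f = cdom X (f 0)"
  "ccod (Dcat X) f = ccod X (f 0)"
  "ccmp (Dcat X) = Dcmp X"
  "cid (Dcat X) = iseq X"
  "cprd (Dcat X) = cprd X"
  "ctrm (Dcat X) = ctrm X"
  "cpr0 (Dcat X) A B = dotR X (iseq X (cprd X A B)) (cpr0 X A B)"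
  "cpr1 (Dcat X) A B = dotR X (iseq X (cprd X A B)) (cpr1 X A B)"
  "cpair (Dcat X) f g = (\<lambda>n. cpair X (f n) (g n))"
  "cadd (Dcat X) = add_seq X"
  "czero (Dcat X) = zero_seq X"
  by (simp_all add: Dcat_def)

lemma Hom_Dcat: "f \<in> Hom (Dcat X) A B \<longleftrightarrow> is_Dseq X A B f \<and> cdom X (f 0) = A \<and> ccod X (f 0) = B"
  by (auto simp: Hom_def)

context cartesian_differential
begin

lemma dotL_omegaD:
  "D_linear h E F \<Longrightarrow> g \<in> Hom X F C \<Longrightarrow> dotL X h (omegaD D g) = omegaD D (ccmp X h g)"
  by (simp add: dotL_def omegaD_def Dn_comp_D_linear_left)

lemma omegaD_zero: "A \<in> cOb X \<Longrightarrow> B \<in> cOb X \<Longrightarrow> omegaD D (czero X A B) = zero_seq X A B"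
  by (simp add: omegaD_def zero_seq_def Dn_zero)

lemma omegaD_add:
  "f \<in> Hom X A B \<Longrightarrow> g \<in> Hom X A B \<Longrightarrow> omegaD D (cadd X f g) = add_seq X (omegaD D f) (omegaD D g)"
  by (simp add: omegaD_def add_seq_def Dn_add)

lemma Dseq_conditions_omegaD:
  assumes G: "G \<in> Hom X E B"
  shows "dotL X (inj0 X E) (omegaD D (D G)) = zero_seq X E B"
    and "dotL X (one_times X E (cadd X (cpr0 X E E) (cpr1 X E E))) (omegaD D (D G)) =
         add_seq X (dotL X (one_times X E (cpr0 X E E)) (omegaD D (D G)))
                   (dotL X (one_times X E (cpr1 X E E)) (omegaD D (D G)))"
    and "dotL X (ell X E) (omegaD D (D (D G))) = omegaD D (D G)"
    and "dotL X (cswap X E) (omegaD D (D (D G))) = omegaD D (D (D G))"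
proof -
  have E: "E \<in> cOb X" and B: "B \<in> cOb X" using G Hom_obs by auto
  note DG = D_Hom[OF G] and DDG = D_Hom[OF D_Hom[OF G]]
  show "dotL X (inj0 X E) (omegaD D (D G)) = zero_seq X E B"
    using dotL_omegaD[OF D_linear_inj0[OF E] DG] inj0_D[OF G] omegaD_zero[OF E B] by simp
  note lin_sum = D_linear_one_times[OF E D_linear_pr_sum[OF E]]
    and lin_pr0 = D_linear_one_times[OF E D_linear_pr0[OF E E, folded Pob_def]]
    and lin_pr1 = D_linear_one_times[OF E D_linear_pr1[OF E E, folded Pob_def]]
  show "dotL X (one_times X E (cadd X (cpr0 X E E) (cpr1 X E E))) (omegaD D (D G)) =
         add_seq X (dotL X (one_times X E (cpr0 X E E)) (omegaD D (D G)))
                   (dotL X (one_times X E (cpr1 X E E)) (omegaD D (D G)))"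
    using dotL_omegaD[OF lin_sum DG] dotL_omegaD[OF lin_pr0 DG] dotL_omegaD[OF lin_pr1 DG]
      one_times_add_D[OF G]
      omegaD_add[OF comp_Hom[OF D_linear_Hom[OF lin_pr0] DG] comp_Hom[OF D_linear_Hom[OF lin_pr1] DG]]
    by simp
  show "dotL X (ell X E) (omegaD D (D (D G))) = omegaD D (D G)"
    using dotL_omegaD[OF D_linear_ell[OF E] DDG] ell_DD[OF G] by simp
  show "dotL X (cswap X E) (omegaD D (D (D G))) = omegaD D (D (D G))"
    using dotL_omegaD[OF D_linear_cswap[OF E] DDG] cswap_DD[OF G] by simp
qed

lemma omegaD_is_Dseq: "f \<in> Hom X A B \<Longrightarrow> is_Dseq X A B (omegaD D f)"
  unfolding is_Dseq_def Let_def Dseq_pow_omegaD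
  using Dn_Hom Dseq_conditions_omegaD[OF Dn_Hom] by (simp add: omegaD_def)

lemma omegaD_Hom_Dcat: "f \<in> Hom X A B \<Longrightarrow> omegaD D f \<in> Hom (Dcat X) A B"
  using omegaD_is_Dseq[of f A B] by (simp add: Hom_Dcat omegaD_def Hom_def)

lemma omegaD_id: "A \<in> cOb X \<Longrightarrow> omegaD D (cid X A) = iseq X A"
  by (simp add: omegaD_def Dn_id fun_eq_iff)

lemma omegaD_comp:
  "f \<in> Hom X A B \<Longrightarrow> g \<in> Hom X B C \<Longrightarrow> omegaD D (ccmp X f g) = Dcmp X (omegaD D f) (omegaD D g)"
  by (simp add: Dcmp_def Tpow_omegaD fun_eq_iff) (simp add: omegaD_def Dn_comp)

lemma omegaD_D_linear:
  assumes h: "D_linear h E F"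
  shows "omegaD D h = dotR X (iseq X E) h"
proof
  fix n
  have hh: "h \<in> Hom X E F" using h by (rule D_linear_Hom)
  have E: "E \<in> cOb X" using hh Hom_obs by auto
  have "(D ^^ n) h = (D ^^ n) (ccmp X (cid X E) h)" using id_left[OF hh] by simp
  also have "\<dots> = ccmp X (iseq X E n) h"
    using Dn_comp_D_linear_right[OF id_Hom[OF E] h] Dn_id[OF E] by simp
  finally show "omegaD D h n = dotR X (iseq X E) h n" by (simp add: omegaD_def dotR_def)
qed

lemma omegaD_strict_cla_functor: "strict_cla_functor X (Dcat X) id (omegaD D)"
  unfolding strict_cla_functor_def
  by (auto simp: omegaD_Hom_Dcat omegaD_id omegaD_comp omegaD_zero omegaD_add
      omegaD_D_linear[OF D_linear_pr0] omegaD_D_linear[OF D_linear_pr1])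

lemma omegaD_coalgebra: "is_coalgebra X id (omegaD D)"
  unfolding is_coalgebra_def
  by (simp add: omegaD_strict_cla_functor eps_def delta_def Dmap_def Dseq_pow_omegaD)
    (simp add: omegaD_def funpow_add fun_eq_iff)

end

section \<open>The differential combinator of a coalgebra\<close>

lemma is_Dseq_initial:
  assumes "is_Dseq X A B g"
  shows "ccmp X (inj0 X A) (g 1) = czero X A B"
    and "ccmp X (one_times X A (cadd X (cpr0 X A A) (cpr1 X A A))) (g 1) =
         cadd X (ccmp X (one_times X A (cpr0 X A A)) (g 1)) (ccmp X (one_times X A (cpr1 X A A)) (g 1))"
    and "ccmp X (ell X A) (g 2) = g 1"
    and "ccmp X (cswap X A) (g 2) = g 2"
proof -
  from assms[unfolded is_Dseq_def, THEN conjunct2, THEN spec[of _ 0]]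
  have "dotL X (inj0 X A) (Dseq_pow 1 g) 0 = zero_seq X A B 0"
    and "dotL X (one_times X A (cadd X (cpr0 X A A) (cpr1 X A A))) (Dseq_pow 1 g) 0 =
         add_seq X (dotL X (one_times X A (cpr0 X A A)) (Dseq_pow 1 g))
                   (dotL X (one_times X A (cpr1 X A A)) (Dseq_pow 1 g)) 0"
    and "dotL X (ell X A) (Dseq_pow 2 g) 0 = Dseq_pow 1 g 0"
    and "dotL X (cswap X A) (Dseq_pow 2 g) 0 = Dseq_pow 2 g 0"
    by (simp_all add: Let_def numeral_2_eq_2)
  then show "ccmp X (inj0 X A) (g 1) = czero X A B"
    and "ccmp X (one_times X A (cadd X (cpr0 X A A) (cpr1 X A A))) (g 1) =
         cadd X (ccmp X (one_times X A (cpr0 X A A)) (g 1)) (ccmp X (one_times X A (cpr1 X A A)) (g 1))"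
    and "ccmp X (ell X A) (g 2) = g 1"
    and "ccmp X (cswap X A) (g 2) = g 2"
    by (simp_all add: dotL_def Dseq_pow_def zero_seq_def add_seq_def numeral_2_eq_2)
qed

locale differential_coalgebra = cartesian_left_additive X for X :: "('o, 'm, 'z) clac_scheme" +
  fixes wo :: "'o \<Rightarrow> 'o" and wm :: "'m \<Rightarrow> nat \<Rightarrow> 'm"
  assumes coalgebra: "is_coalgebra X wo wm"
begin

lemma wm_strict_cla_functor: "strict_cla_functor X (Dcat X) wo wm"
  using coalgebra by (simp add: is_coalgebra_def)

lemma wo_id: "A \<in> cOb X \<Longrightarrow> wo A = A"
  using coalgebra by (simp add: is_coalgebra_def)

lemma wm_0: "f \<in> cArr X \<Longrightarrow> wm f 0 = f"
  using coalgebra by (simp add: is_coalgebra_def eps_def)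

text \<open>The coassociativity \<omega>\<delta> = \<omega>\<D>[\<omega>], read off termwise.\<close>

lemma wm_shift: "f \<in> cArr X \<Longrightarrow> wm f (n + k) = wm (wm f k) n"
  using coalgebra unfolding is_coalgebra_def delta_def Dmap_def Dseq_pow_def
  by (metis (no_types, lifting))

lemma wm_Hom_Dcat: "f \<in> Hom X A B \<Longrightarrow> wm f \<in> Hom (Dcat X) A B"
  using wm_strict_cla_functor Hom_obs wo_id unfolding strict_cla_functor_def by metis

lemma wm_is_Dseq: "f \<in> Hom X A B \<Longrightarrow> is_Dseq X A B (wm f)"
  using wm_Hom_Dcat by (simp add: Hom_Dcat)

lemma wm_nth_Hom: "f \<in> Hom X A B \<Longrightarrow> wm f n \<in> Hom X (Pnob X n A) B"
  using wm_is_Dseq unfolding is_Dseq_def by blast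

lemma omegaD_Domega: "f \<in> cArr X \<Longrightarrow> omegaD (Domega wm) f = wm f"
proof
  fix n
  assume f: "f \<in> cArr X"
  show "omegaD (Domega wm) f n = wm f n"
  proof (induction n)
    case 0
    show ?case using wm_0[OF f] by (simp add: omegaD_def)
  next
    case (Suc n)
    have "wm f n \<in> cArr X" using wm_nth_Hom[OF arr_Hom[OF f]] Hom_arr by blast
    then show ?case using Suc wm_shift[OF f, of 1 n] by (simp add: omegaD_def Domega_def)
  qed
qed

lemma wm_id: "A \<in> cOb X \<Longrightarrow> wm (cid X A) = iseq X A"
  using wm_strict_cla_functor wo_id unfolding strict_cla_functor_def by simp

lemma wm_comp: "f \<in> Hom X A B \<Longrightarrow> g \<in> Hom X B C \<Longrightarrow> wm (ccmp X f g) = Dcmp X (wm f) (wm g)"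
  using wm_strict_cla_functor Hom_obs[of f A B] Hom_obs[of g B C]
  unfolding strict_cla_functor_def Dcat_simps by blast

lemma wm_pr0: "A \<in> cOb X \<Longrightarrow> B \<in> cOb X \<Longrightarrow> wm (cpr0 X A B) = dotR X (iseq X (cprd X A B)) (cpr0 X A B)"
  using wm_strict_cla_functor wo_id unfolding strict_cla_functor_def by simp

lemma wm_pr1: "A \<in> cOb X \<Longrightarrow> B \<in> cOb X \<Longrightarrow> wm (cpr1 X A B) = dotR X (iseq X (cprd X A B)) (cpr1 X A B)"
  using wm_strict_cla_functor wo_id unfolding strict_cla_functor_def by simp

lemma wm_zero: "A \<in> cOb X \<Longrightarrow> B \<in> cOb X \<Longrightarrow> wm (czero X A B) = zero_seq X A B"
  using wm_strict_cla_functor wo_id unfolding strict_cla_functor_def by simp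

lemma wm_add: "f \<in> Hom X A B \<Longrightarrow> g \<in> Hom X A B \<Longrightarrow> wm (cadd X f g) = add_seq X (wm f) (wm g)"
  using wm_strict_cla_functor Hom_obs[of f A B] unfolding strict_cla_functor_def Dcat_simps by blast

lemma Domega_Hom: "f \<in> Hom X A B \<Longrightarrow> Domega wm f \<in> Hom X (Pob X A) B"
  using wm_nth_Hom[of f A B 1] by (simp add: Domega_def Pnob_def)

lemma Domega_add:
  "f \<in> Hom X A B \<Longrightarrow> g \<in> Hom X A B \<Longrightarrow> Domega wm (cadd X f g) = cadd X (Domega wm f) (Domega wm g)"
  by (simp add: Domega_def wm_add add_seq_def)

lemma Domega_zero: "A \<in> cOb X \<Longrightarrow> B \<in> cOb X \<Longrightarrow> Domega wm (czero X A B) = czero X (Pob X A) B"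
  by (simp add: Domega_def wm_zero zero_seq_def Pnob_def)

lemma Domega_id: "A \<in> cOb X \<Longrightarrow> Domega wm (cid X A) = cpr1 X A A"
  using id_right[OF pr1_Hom[of A A]] by (simp add: Domega_def wm_id)

lemma Domega_pr0:
  "A \<in> cOb X \<Longrightarrow> B \<in> cOb X \<Longrightarrow>
   Domega wm (cpr0 X A B) = ccmp X (cpr1 X (cprd X A B) (cprd X A B)) (cpr0 X A B)"
  using id_right[OF pr1_Hom] prd_ob by (simp add: Domega_def wm_pr0 dotR_def)

lemma Domega_pr1:
  "A \<in> cOb X \<Longrightarrow> B \<in> cOb X \<Longrightarrow>
   Domega wm (cpr1 X A B) = ccmp X (cpr1 X (cprd X A B) (cprd X A B)) (cpr1 X A B)"
  using id_right[OF pr1_Hom] prd_ob by (simp add: Domega_def wm_pr1 dotR_def)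

lemma Domega_comp:
  "f \<in> Hom X A B \<Longrightarrow> g \<in> Hom X B C \<Longrightarrow>
   Domega wm (ccmp X f g) = ccmp X (cpair X (ccmp X (cpr0 X A A) f) (Domega wm f)) (Domega wm g)"
  using wm_0[OF Hom_arr, of f A B]
  by (simp add: Domega_def wm_comp Dcmp_def Tpow_def Tan_def Hom_dom)

lemma Domega_comp_linear:
  assumes p: "p \<in> Hom X C E" and k: "k \<in> Hom X E F"
    and Dk: "Domega wm k = ccmp X (cpr1 X E E) k"
  shows "Domega wm (ccmp X p k) = ccmp X (Domega wm p) k"
proof -
  have C: "C \<in> cOb X" and E: "E \<in> cOb X" using p Hom_obs by auto
  have p0: "ccmp X (cpr0 X C C) p \<in> Hom X (cprd X C C) E"
    and Dp: "Domega wm p \<in> Hom X (cprd X C C) E"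
    using comp_Hom[OF pr0_Hom[OF C C] p] Domega_Hom[OF p] by (simp_all add: Pob_def)
  have "Domega wm (ccmp X p k) = ccmp X (cpair X (ccmp X (cpr0 X C C) p) (Domega wm p)) (ccmp X (cpr1 X E E) k)"
    using Domega_comp[OF p k] Dk by simp
  also have "\<dots> = ccmp X (ccmp X (cpair X (ccmp X (cpr0 X C C) p) (Domega wm p)) (cpr1 X E E)) k"
    using comp_assoc[OF pair_Hom[OF p0 Dp] pr1_Hom[OF E E] k] by simp
  also have "\<dots> = ccmp X (Domega wm p) k"
    using pair_pr1[OF p0 Dp] by simp
  finally show ?thesis .
qed

text \<open>CD.4 is not part of the coalgebra data: it follows from the chain rule and the
  derivatives of the projections by the universal property of the product.\<close>

lemma Domega_pair:
  assumes f: "f \<in> Hom X C A" and g: "g \<in> Hom X C B"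
  shows "Domega wm (cpair X f g) = cpair X (Domega wm f) (Domega wm g)"
proof (rule pair_unique)
  have A: "A \<in> cOb X" and B: "B \<in> cOb X" using f g Hom_obs by auto
  show "Domega wm (cpair X f g) \<in> Hom X (Pob X C) (cprd X A B)"
    using Domega_Hom[OF pair_Hom[OF f g]] .
  show "ccmp X (Domega wm (cpair X f g)) (cpr0 X A B) = Domega wm f"
    using Domega_comp_linear[OF pair_Hom[OF f g] pr0_Hom[OF A B] Domega_pr0[OF A B]] pair_pr0[OF f g]
    by simp
  show "ccmp X (Domega wm (cpair X f g)) (cpr1 X A B) = Domega wm g"
    using Domega_comp_linear[OF pair_Hom[OF f g] pr1_Hom[OF A B] Domega_pr1[OF A B]] pair_pr1[OF f g]
    by simp
qed (use f g Hom_obs in auto)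

lemma Domega_Domega: "f \<in> Hom X A B \<Longrightarrow> Domega wm (Domega wm f) = wm f 2"
  using wm_shift[OF Hom_arr, of f A B 1 1] by (simp add: Domega_def numeral_2_eq_2)

lemma Domega_cdc: "is_cdc X (Domega wm)"
  unfolding is_cdc_def
  using clac Domega_Hom Domega_add Domega_zero Domega_id Domega_pr0 Domega_pr1 Domega_pair Domega_comp
    is_Dseq_initial[OF wm_is_Dseq] Domega_Domega
  by (simp add: Domega_def)

end

lemma differential_coalgebraI:
  "is_clac X \<Longrightarrow> is_coalgebra X wo wm \<Longrightarrow> differential_coalgebra X wo wm"
  by (simp add: differential_coalgebra_def differential_coalgebra_axioms_def cartesian_left_additive_def)

section \<open>Morphisms\<close>

lemma funpow_commute_on:
  assumes "\<forall>f\<in>S. F (D f) = D' (F f)" and "\<forall>f\<in>S. D f \<in> S" and "f \<in> S"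
  shows "(D' ^^ n) (F f) = F ((D ^^ n) f)"
proof -
  have "(D ^^ n) f \<in> S \<and> (D' ^^ n) (F f) = F ((D ^^ n) f)"
    by (induction n) (use assms in auto)
  then show ?thesis ..
qed

lemma omegaD_Dmap_iff:
  assumes "\<forall>f\<in>S. D f \<in> S"
  shows "(\<forall>f\<in>S. omegaD D' (F f) = Dmap F (omegaD D f)) \<longleftrightarrow> (\<forall>f\<in>S. F (D f) = D' (F f))"
proof
  assume "\<forall>f\<in>S. omegaD D' (F f) = Dmap F (omegaD D f)"
  then show "\<forall>f\<in>S. F (D f) = D' (F f)"
    by (auto simp: omegaD_def Dmap_def fun_eq_iff dest!: bspec dest: spec[of _ 1])
next
  assume commute: "\<forall>f\<in>S. F (D f) = D' (F f)"
  show "\<forall>f\<in>S. omegaD D' (F f) = Dmap F (omegaD D f)"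
    using funpow_commute_on[OF commute assms] by (simp add: omegaD_def Dmap_def fun_eq_iff)
qed

lemma (in cartesian_differential) coalg_morphism_omegaD_iff:
  "coalg_morphism X Y id (omegaD D) id (omegaD D') Fo Fm \<longleftrightarrow> strict_cd_functor X Y D D' Fo Fm"
  using omegaD_Dmap_iff[of "cArr X" D D' Fm] D_arr
  unfolding coalg_morphism_def strict_cd_functor_def by auto

lemma coalg_morphism_iff_omegaD_Domega:
  assumes "differential_coalgebra X wo wm" and "differential_coalgebra Y wo' wm'"
  shows "coalg_morphism X Y wo wm wo' wm' Fo Fm \<longleftrightarrow>
         coalg_morphism X Y id (omegaD (Domega wm)) id (omegaD (Domega wm')) Fo Fm"
proof -
  interpret X: differential_coalgebra X wo wm by (fact assms(1))
  interpret Y: differential_coalgebra Y wo' wm' by (fact assms(2))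
  have "wo' (Fo A) = Fo (wo A)" if "strict_cla_functor X Y Fo Fm" and "A \<in> cOb X" for A
    using that X.wo_id Y.wo_id by (simp add: strict_cla_functor_def)
  moreover have "wm' (Fm f) = omegaD (Domega wm') (Fm f)" and "wm f = omegaD (Domega wm) f"
    if "strict_cla_functor X Y Fo Fm" and "f \<in> cArr X" for f
    using X.omegaD_Domega[OF that(2)] Y.omegaD_Domega[OF X.strict_cla_functor_arr[OF that]] by simp_all
  ultimately show ?thesis
    unfolding coalg_morphism_def by auto
qed

lemma coalg_morphism_iff_strict_cd_functor:
  assumes "is_clac X" and "is_clac Y" and "is_coalgebra X wo wm" and "is_coalgebra Y wo' wm'"
  shows "coalg_morphism X Y wo wm wo' wm' Fo Fm \<longleftrightarrow>
         strict_cd_functor X Y (Domega wm) (Domega wm') Fo Fm"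
proof -
  have X: "differential_coalgebra X wo wm" and Y: "differential_coalgebra Y wo' wm'"
    using assms by (simp_all add: differential_coalgebraI)
  have "is_cdc X (Domega wm)" using X by (rule differential_coalgebra.Domega_cdc)
  then show ?thesis
    unfolding coalg_morphism_iff_omegaD_Domega[OF X Y]
    by (rule cartesian_differential.coalg_morphism_omegaD_iff[OF cartesian_differential.intro])
qed

theorem theorem4p21:
  fixes X :: "('o, 'm) clac" and Y :: "('p, 'n) clac"
  assumes "is_clac X" and "is_clac Y"
  shows
    "(\<forall>D. is_cdc X D \<longrightarrow> is_coalgebra X id (omegaD D)) \<and>
     (\<forall>wo wm. is_coalgebra X wo wm \<longrightarrow> is_cdc X (Domega wm)) \<and>
     (\<forall>D. is_cdc X D \<longrightarrow> (\<forall>f \<in> cArr X. Domega (omegaD D) f = D f)) \<and>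
     (\<forall>wo wm. is_coalgebra X wo wm \<longrightarrow>
        (\<forall>A \<in> cOb X. id A = wo A) \<and> (\<forall>f \<in> cArr X. omegaD (Domega wm) f = wm f)) \<and>
     (\<forall>D D' Fo Fm. is_cdc X D \<longrightarrow> is_cdc Y D' \<longrightarrow>
        (coalg_morphism X Y id (omegaD D) id (omegaD D') Fo Fm \<longleftrightarrow>
         strict_cd_functor X Y D D' Fo Fm)) \<and>
     (\<forall>wo wm wo' wm' Fo Fm. is_coalgebra X wo wm \<longrightarrow> is_coalgebra Y wo' wm' \<longrightarrow>
        (coalg_morphism X Y wo wm wo' wm' Fo Fm \<longleftrightarrow>
         strict_cd_functor X Y (Domega wm) (Domega wm') Fo Fm))"
proof (intro conjI allI impI)
  fix D
  assume "is_cdc X D"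
  then show "is_coalgebra X id (omegaD D)"
    by (rule cartesian_differential.omegaD_coalgebra[OF cartesian_differential.intro])
next
  fix wo wm
  assume "is_coalgebra X wo wm"
  then show "is_cdc X (Domega wm)"
    by (rule differential_coalgebra.Domega_cdc[OF differential_coalgebraI[OF assms(1)]])
next
  fix D
  show "\<forall>f \<in> cArr X. Domega (omegaD D) f = D f"
    by (simp add: Domega_def omegaD_def)
next
  fix wo wm
  assume "is_coalgebra X wo wm"
  then interpret differential_coalgebra X wo wm
    by (rule differential_coalgebraI[OF assms(1)])
  show "\<forall>A \<in> cOb X. id A = wo A" by (simp add: wo_id)
  show "\<forall>f \<in> cArr X. omegaD (Domega wm) f = wm f" by (simp add: omegaD_Domega)
next
  fix D D' Fo Fm
  assume "is_cdc X D"
  then show "coalg_morphism X Y id (omegaD D) id (omegaD D') Fo Fm \<longleftrightarrow> strict_cd_functor X Y D D' Fo Fm"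
    by (rule cartesian_differential.coalg_morphism_omegaD_iff[OF cartesian_differential.intro])
next
  fix wo wm wo' wm' Fo Fm
  assume "is_coalgebra X wo wm" and "is_coalgebra Y wo' wm'"
  with assms show "coalg_morphism X Y wo wm wo' wm' Fo Fm \<longleftrightarrow>
      strict_cd_functor X Y (Domega wm) (Domega wm') Fo Fm"
    by (rule coalg_morphism_iff_strict_cd_functor)
qed

end
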